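(* Let $\mathcal H,\mathcal K$ be Hilbert spaces, $A$ a densely defined linear operator in $\mathcal H$ and $B$ a densely defined linear operator in $\mathcal K$. Suppose $A\dashv B$ with (possibly unbounded) intertwining operator $T$. If the resolvent set $\rho(A)$ is nonempty, then $T$ is everywhere defined and bounded.
   Context: A closed, densely defined operator $T:\mathcal H\to\mathcal K$ is called an intertwining operator for $A$ and $B$ if: (io$_0$) $D(A)\subset D(T)$ and $D(TA)=D(A)$, i.e. $\xi\in D(A)$ implies $A\xi\in D(T)$; (io$_1$) $T$ maps $D(A)$ into $D(B)$; (io$_2$) $BT\xi=TA\xi$ for all $\xi\in D(A)$. We write $A\dashv B$ ($A$ is quasi-similar to $B$) if there exists an intertwining operator $T$ for $A$ and $B$ which is injective and whose inverse $T^{-1}$ (defined on the range of $T$) is densely defined. Equivalently, $A\subseteq T^{-1}BT$ for a closed, densely defined, injective operator $T$ with dense range. *)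

theory Defs
  imports "HOL-Analysis.Analysis"
begin

class complex_vector = real_vector +
  fixes scaleC :: "complex \<Rightarrow> 'a \<Rightarrow> 'a" (infixr "*\<^sub>C" 75)
  assumes scaleC_add_right: "a *\<^sub>C (x + y) = a *\<^sub>C x + a *\<^sub>C y"
    and scaleC_add_left: "(a + b) *\<^sub>C x = a *\<^sub>C x + b *\<^sub>C x"
    and scaleC_scaleC: "a *\<^sub>C (b *\<^sub>C x) = (a * b) *\<^sub>C x"
    and scaleC_one: "1 *\<^sub>C x = x"
    and scaleR_scaleC: "scaleR r x = complex_of_real r *\<^sub>C x"

class complex_normed_vector = complex_vector + real_normed_vector +
  assumes norm_scaleC: "norm (a *\<^sub>C x) = cmod a * norm x"

class complex_inner = complex_normed_vector +
  fixes cinner :: "'a \<Rightarrow> 'a \<Rightarrow> complex"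
  assumes cinner_commute: "cinner x y = cnj (cinner y x)"
    and cinner_add_left: "cinner (x + y) z = cinner x z + cinner y z"
    and cinner_scaleC_left: "cinner (a *\<^sub>C x) y = cnj a * cinner x y"
    and cinner_self_real_nonneg: "Im (cinner x x) = 0 \<and> Re (cinner x x) \<ge> 0"
    and cinner_eq_zero_iff: "cinner x x = 0 \<longleftrightarrow> x = 0"
    and norm_eq_sqrt_cinner: "norm x = sqrt (Re (cinner x x))"

class chilbert_space = complex_inner + complete_space

text \<open>An operator from 'a to 'b is a pair (domain, action on the domain).\<close>
type_synonym ('a, 'b) lin_op = "'a set \<times> ('a \<Rightarrow> 'b)"

abbreviation dom_op :: "('a, 'b) lin_op \<Rightarrow> 'a set" where "dom_op T \<equiv> fst T"
abbreviation app_op :: "('a, 'b) lin_op \<Rightarrow> 'a \<Rightarrow> 'b" where "app_op T \<equiv> snd T"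

definition csubspace :: "'a::complex_vector set \<Rightarrow> bool" where
  "csubspace S \<longleftrightarrow> 0 \<in> S \<and> (\<forall>x\<in>S. \<forall>y\<in>S. x + y \<in> S) \<and> (\<forall>c. \<forall>x\<in>S. c *\<^sub>C x \<in> S)"

definition is_lin_op :: "('a::complex_vector, 'b::complex_vector) lin_op \<Rightarrow> bool" where
  "is_lin_op T \<longleftrightarrow> csubspace (dom_op T)
     \<and> (\<forall>x\<in>dom_op T. \<forall>y\<in>dom_op T. app_op T (x + y) = app_op T x + app_op T y)
     \<and> (\<forall>c. \<forall>x\<in>dom_op T. app_op T (c *\<^sub>C x) = c *\<^sub>C app_op T x)"

definition densely_defined :: "('a::topological_space, 'b) lin_op \<Rightarrow> bool" where
  "densely_defined T \<longleftrightarrow> closure (dom_op T) = UNIV"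

definition graph_op :: "('a, 'b) lin_op \<Rightarrow> ('a \<times> 'b) set" where
  "graph_op T = {(x, app_op T x) | x. x \<in> dom_op T}"

definition closed_op :: "('a::topological_space, 'b::topological_space) lin_op \<Rightarrow> bool" where
  "closed_op T \<longleftrightarrow> closed (graph_op T)"

definition resolvent_set :: "('a::complex_normed_vector, 'a) lin_op \<Rightarrow> complex set" where
  "resolvent_set A = {z. bij_betw (\<lambda>x. app_op A x - z *\<^sub>C x) (dom_op A) UNIV
      \<and> (\<exists>C. \<forall>x\<in>dom_op A. norm x \<le> C * norm (app_op A x - z *\<^sub>C x))}"

text \<open>Intertwining operator T for A and B (conditions io0, io1, io2), T closed and densely defined.\<close>
definition intertwining :: "('a::complex_normed_vector, 'b::complex_normed_vector) lin_op
    \<Rightarrow> ('a, 'a) lin_op \<Rightarrow> ('b, 'b) lin_op \<Rightarrow> bool" where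
  "intertwining T A B \<longleftrightarrow> is_lin_op T \<and> closed_op T \<and> densely_defined T
     \<and> dom_op A \<subseteq> dom_op T \<and> (\<forall>x\<in>dom_op A. app_op A x \<in> dom_op T)
     \<and> (\<forall>x\<in>dom_op A. app_op T x \<in> dom_op B)
     \<and> (\<forall>x\<in>dom_op A. app_op B (app_op T x) = app_op T (app_op A x))"

text \<open>Quasi-similarity via a given intertwining operator T: T injective with densely defined
  inverse (i.e. dense range).\<close>
definition quasi_similar_via :: "('a::complex_normed_vector, 'b::complex_normed_vector) lin_op
    \<Rightarrow> ('a, 'a) lin_op \<Rightarrow> ('b, 'b) lin_op \<Rightarrow> bool" where
  "quasi_similar_via T A B \<longleftrightarrow> intertwining T A B \<and> inj_on (app_op T) (dom_op T)
     \<and> closure (app_op T ` dom_op T) = UNIV"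

definition quasi_similar :: "('a::complex_normed_vector, 'a) lin_op \<Rightarrow> ('b::complex_normed_vector, 'b) lin_op \<Rightarrow> bool" where
  "quasi_similar A B \<longleftrightarrow> (\<exists>T. quasi_similar_via T A B)"

end

theory Submission
  imports Defs
begin

(* If z lies in the resolvent set of A, every vector y can be written as
   y = A xi - z xi with xi in D(A).  Since D(A) and A D(A) both lie in D(T) (condition io0)
   and D(T) is a subspace, y lies in D(T); hence T is everywhere defined.  A closed,
   everywhere defined linear operator between Hilbert spaces is bounded by the closed
   graph theorem, which the distribution library does not provide for linear maps. *)

instance chilbert_space \<subseteq> banach ..

section \<open>The closed graph theorem for linear maps between Banach spaces\<close>

text \<open>Baire category step: the closed sets \<open>closure {x. norm (f x) \<le> n}\<close> cover
  the space, so one of them has nonempty interior.  No property of f is needed.\<close>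
lemma sublevel_closure_contains_ball:
  fixes f :: "'a::banach \<Rightarrow> 'b::real_normed_vector"
  shows "\<exists>c x0 r. r > 0 \<and> ball x0 r \<subseteq> closure {x. norm (f x) \<le> c}"
proof -
  define X where "X n = closure {x. norm (f x) \<le> real n}" for n
  have cover: "\<Union>(range X) = UNIV"
  proof (intro set_eqI iffI)
    fix x :: 'a
    obtain n where "norm (f x) \<le> real n" using real_arch_simple by blast
    then have "x \<in> X n" unfolding X_def by (blast intro: closure_subset[THEN subsetD])
    then show "x \<in> \<Union>(range X)" by blast
  qed simp
  have "\<exists>n. interior (X n) \<noteq> {}"
  proof (rule ccontr)
    assume "\<not> ?thesis"
    then have "euclidean interior_of \<Union>(range X) = {}"
      by (intro Baire_category_alt)
        (auto simp: X_def completely_metrizable_space_euclidean closed_closedin[symmetric])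
    then show False using cover by simp
  qed
  then obtain n x0 where "x0 \<in> interior (X n)" by blast
  then obtain r where "r > 0" "ball x0 r \<subseteq> X n" using mem_interior by blast
  then show ?thesis unfolding X_def by blast
qed

text \<open>For linear f the dense ball can be moved to the origin: writing u as half the
  difference of the points x0 + u and x0 - u of the ball.\<close>
lemma linear_sublevel_dense_near_zero:
  fixes f :: "'a::banach \<Rightarrow> 'b::real_normed_vector"
  assumes lin: "linear f"
  shows "\<exists>c r. r > 0 \<and> (\<forall>u e. norm u < r \<longrightarrow> e > 0 \<longrightarrow>
           (\<exists>v. norm (u - v) < e \<and> norm (f v) \<le> c))"
proof -
  obtain c x0 r where r: "r > 0" and ball: "ball x0 r \<subseteq> closure {x. norm (f x) \<le> c}"
    using sublevel_closure_contains_ball by blast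
  have "\<exists>v. norm (u - v) < e \<and> norm (f v) \<le> c" if u: "norm u < r" and e: "e > 0" for u e
  proof -
    have "x0 + u \<in> closure {x. norm (f x) \<le> c}" "x0 - u \<in> closure {x. norm (f x) \<le> c}"
      using ball u by (auto simp: dist_norm)
    then obtain a b where a: "norm (f a) \<le> c" "norm (a - (x0 + u)) < e"
      and b: "norm (f b) \<le> c" "norm (b - (x0 - u)) < e"
      using e unfolding closure_approachable dist_norm by blast
    define v where "v = (1/2) *\<^sub>R (a - b)"
    have "u - v = (1/2) *\<^sub>R ((x0 + u - a) - (x0 - u - b))"
      unfolding v_def by (simp add: algebra_simps flip: scaleR_add_left)
    then have "norm (u - v) \<le> (1/2) * (norm (x0 + u - a) + norm (x0 - u - b))"
      using norm_triangle_ineq4[of "x0 + u - a" "x0 - u - b"] by simp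
    also have "\<dots> < e" using a b by (simp add: norm_minus_commute)
    finally have "norm (u - v) < e" .
    moreover have "norm (f v) \<le> (1/2) * (norm (f a) + norm (f b))"
      using norm_triangle_ineq4[of "f a" "f b"]
      by (simp add: v_def linear_scale[OF lin] linear_diff[OF lin])
    then have "norm (f v) \<le> c" using a b by simp
    ultimately show ?thesis by blast
  qed
  then show ?thesis using r by blast
qed

lemma linear_approximate_bound:
  fixes f :: "'a::banach \<Rightarrow> 'b::real_normed_vector"
  assumes lin: "linear f"
  shows "\<exists>M\<ge>0. \<forall>u e. e > 0 \<longrightarrow> (\<exists>v. norm (u - v) < e \<and> norm (f v) \<le> M * norm u)"
proof -
  obtain c r where r: "r > 0"
    and near0: "\<And>u e. norm u < r \<Longrightarrow> e > 0 \<Longrightarrow> \<exists>v. norm (u - v) < e \<and> norm (f v) \<le> c"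
    using linear_sublevel_dense_near_zero[OF lin] by blast
  define M where "M = 2 * max c 0 / r"
  have "\<exists>v. norm (u - v) < e \<and> norm (f v) \<le> M * norm u" if e: "e > 0" for u e
  proof (cases "u = 0")
    case True
    then show ?thesis using e by (intro exI[of _ 0]) (simp add: linear_0[OF lin])
  next
    case False
    define t where "t = r / (2 * norm u)"
    have t: "t > 0" "norm (t *\<^sub>R u) < r" using False r by (simp_all add: t_def)
    then obtain w where w: "norm (t *\<^sub>R u - w) < e * t" "norm (f w) \<le> c"
      using near0[of "t *\<^sub>R u" "e * t"] e by auto
    define v where "v = (1/t) *\<^sub>R w"
    have "u - v = (1/t) *\<^sub>R (t *\<^sub>R u - w)" using t by (simp add: v_def algebra_simps)
    then have "norm (u - v) = norm (t *\<^sub>R u - w) / t" using t by simp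
    also have "\<dots> < e" using w t by (simp add: divide_less_eq)
    finally have "norm (u - v) < e" .
    moreover have "norm (f v) = norm (f w) / t" using t by (simp add: v_def linear_scale[OF lin])
    then have "norm (f v) \<le> max c 0 / t" using w t by (simp add: divide_right_mono)
    then have "norm (f v) \<le> M * norm u" using r by (simp add: t_def M_def mult.commute mult.left_commute)
    ultimately show ?thesis by blast
  qed
  moreover have "M \<ge> 0" using r by (simp add: M_def)
  ultimately show ?thesis by blast
qed

text \<open>The pieces
  approximate the successive remainders to within e / 2^(k+1).\<close>
lemma approximate_bound_series:
  fixes f :: "'a::real_normed_vector \<Rightarrow> 'b::real_normed_vector"
  assumes approx: "\<And>u e. e > 0 \<Longrightarrow> \<exists>v. norm (u - v) < e \<and> norm (f v) \<le> M * norm u"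
    and M: "M \<ge> 0" and e: "e > 0" and x: "norm x \<le> e"
  shows "\<exists>v. v sums x \<and> (\<forall>k. norm (f (v k)) \<le> M * e * (1/2)^k)"
proof -
  define g where "g u d = (SOME v. norm (u - v) < d \<and> norm (f v) \<le> M * norm u)" for u d
  have g: "norm (u - g u d) < d" "norm (f (g u d)) \<le> M * norm u" if "d > 0" for u d
    using someI_ex[OF approx[OF that]] unfolding g_def by blast+
  define d where "d k = e * (1/2)^Suc k" for k
  have d: "d k > 0" for k using e by (simp add: d_def)
  define w where "w = rec_nat x (\<lambda>k wk. wk - g wk (d k))"
  define v where "v k = g (w k) (d k)" for k
  have w0: "w 0 = x" and wS: "w (Suc k) = w k - v k" for k
    by (simp_all add: w_def v_def)
  have w_small: "norm (w k) \<le> e * (1/2)^k" for k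
  proof (induction k)
    case 0 then show ?case using x by (simp add: w0)
  next
    case (Suc k) then show ?case using g(1)[OF d, of "w k" k] by (simp add: wS v_def d_def)
  qed
  have partial: "(\<Sum>i<k. v i) = x - w k" for k
    by (induction k) (simp_all add: w0 wS)
  have "(\<lambda>k. e * (1/2)^k) \<longlonglongrightarrow> 0"
    by (intro tendsto_mult_right_zero LIMSEQ_realpow_zero) simp_all
  then have "w \<longlonglongrightarrow> 0"
    by (rule Lim_null_comparison[rotated]) (simp add: w_small)
  then have "v sums x"
    unfolding sums_def partial using tendsto_diff[OF tendsto_const[of x]] by fastforce
  moreover have "norm (f (v k)) \<le> M * e * (1/2)^k" for k
  proof -
    have "norm (f (v k)) \<le> M * norm (w k)" using g(2)[OF d] by (simp add: v_def)
    also have "\<dots> \<le> M * (e * (1/2)^k)" using w_small M by (rule mult_left_mono)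
    finally show ?thesis by simp
  qed
  ultimately show ?thesis by blast
qed

theorem closed_graph_bounded:
  fixes f :: "'a::banach \<Rightarrow> 'b::banach"
  assumes lin: "linear f" and closed_graph: "closed {(x, f x) | x. True}"
  shows "\<exists>C. \<forall>x. norm (f x) \<le> C * norm x"
proof -
  obtain M where M: "M \<ge> 0"
    and approx: "\<And>u e. e > 0 \<Longrightarrow> \<exists>v. norm (u - v) < e \<and> norm (f v) \<le> M * norm u"
    using linear_approximate_bound[OF lin] by blast
  have "norm (f x) \<le> 2 * M * norm x" for x
  proof (cases "x = 0")
    case True then show ?thesis by (simp add: linear_0[OF lin])
  next
    case False
    define e where "e = norm x"
    have e: "e > 0" using False by (simp add: e_def)
    obtain v where v: "v sums x" and fv: "\<And>k. norm (f (v k)) \<le> M * e * (1/2)^k"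
      using approximate_bound_series[OF approx M e] by (auto simp: e_def)
    have geom: "(\<lambda>k. M * e * (1/2)^k) sums (2 * M * e)"
      using sums_mult[OF geometric_sums[of "1/2::real"], of "M * e"] by (simp add: mult_ac)
    have norms: "summable (\<lambda>k. norm (f (v k)))"
      by (rule summable_comparison_test[OF _ sums_summable[OF geom]]) (simp add: fv)
    then have fv_sums: "(\<lambda>k. f (v k)) sums suminf (\<lambda>k. f (v k))"
      by (simp add: summable_norm_cancel summable_sums)
    have "(\<lambda>k. (\<Sum>i<k. v i, f (\<Sum>i<k. v i))) \<longlonglongrightarrow> (x, suminf (\<lambda>k. f (v k)))"
      using tendsto_Pair[OF v[unfolded sums_def] fv_sums[unfolded sums_def]]
      by (simp add: linear_sum[OF lin])
    then have "(x, suminf (\<lambda>k. f (v k))) \<in> {(x, f x) | x. True}"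
      by (rule closed_sequentially[OF closed_graph, rotated]) simp
    then have "f x = suminf (\<lambda>k. f (v k))" by simp
    then have "norm (f x) \<le> (\<Sum>k. norm (f (v k)))" using summable_norm[OF norms] by simp
    also have "\<dots> \<le> 2 * M * e"
      using suminf_le[OF fv norms sums_summable[OF geom]] sums_unique[OF geom] by simp
    finally show ?thesis by (simp add: e_def)
  qed
  then show ?thesis by blast
qed

lemma csubspace_diff:
  assumes "csubspace S" "x \<in> S" "y \<in> S"
  shows "x - y \<in> S"
proof -
  have "x + complex_of_real (-1) *\<^sub>C y \<in> S" using assms unfolding csubspace_def by blast
  moreover have "complex_of_real (-1) *\<^sub>C y = - y" using scaleR_scaleC[of "-1" y] by simp
  ultimately show ?thesis by simp
qed

text \<open>If the resolvent set of A is nonempty, any intertwining operator for A is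
  everywhere defined: each y equals A xi - z xi for some xi in D(A), and both terms
  lie in D(T) by condition io0.\<close>
lemma intertwining_total:
  assumes it: "intertwining T A B" and z: "z \<in> resolvent_set A"
  shows "dom_op T = UNIV"
proof (intro set_eqI iffI)
  fix y
  have "bij_betw (\<lambda>x. app_op A x - z *\<^sub>C x) (dom_op A) UNIV"
    using z by (simp add: resolvent_set_def)
  then have "y \<in> (\<lambda>x. app_op A x - z *\<^sub>C x) ` dom_op A"
    by (simp add: bij_betw_def)
  then obtain \<xi> where \<xi>: "\<xi> \<in> dom_op A" and y: "y = app_op A \<xi> - z *\<^sub>C \<xi>"
    by blast
  have sub: "csubspace (dom_op T)" using it by (simp add: intertwining_def is_lin_op_def)
  have A\<xi>: "app_op A \<xi> \<in> dom_op T" and "\<xi> \<in> dom_op T"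
    using it \<xi> unfolding intertwining_def by blast+
  then have "z *\<^sub>C \<xi> \<in> dom_op T" using sub unfolding csubspace_def by blast
  then show "y \<in> dom_op T" using csubspace_diff[OF sub A\<xi>] y by simp
qed simp

lemma total_lin_op_linear:
  assumes "is_lin_op T" "dom_op T = UNIV"
  shows "linear (app_op T)"
proof (rule linearI)
  fix x y show "app_op T (x + y) = app_op T x + app_op T y"
    using assms unfolding is_lin_op_def by blast
next
  fix r :: real and x
  have "app_op T (complex_of_real r *\<^sub>C x) = complex_of_real r *\<^sub>C app_op T x"
    using assms unfolding is_lin_op_def by blast
  then show "app_op T (r *\<^sub>R x) = r *\<^sub>R app_op T x" by (simp only: scaleR_scaleC)
qed

theorem mainTheorem1:
  fixes A :: "('a::chilbert_space, 'a) lin_op"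
    and B :: "('b::chilbert_space, 'b) lin_op"
    and T :: "('a, 'b) lin_op"
  assumes "is_lin_op A" and "densely_defined A"
    and "is_lin_op B" and "densely_defined B"
    and "quasi_similar_via T A B"
    and "resolvent_set A \<noteq> {}"
  shows "dom_op T = UNIV \<and> (\<exists>C. \<forall>x. norm (app_op T x) \<le> C * norm x)"
proof -
  have it: "intertwining T A B" using assms(5) by (simp add: quasi_similar_via_def)
  obtain z where "z \<in> resolvent_set A" using assms(6) by blast
  then have total: "dom_op T = UNIV" using intertwining_total[OF it] by blast
  have "linear (app_op T)"
    using it total by (intro total_lin_op_linear) (simp_all add: intertwining_def)
  moreover have "closed {(x, app_op T x) | x. True}"
    using it total by (simp add: intertwining_def closed_op_def graph_op_def)
  ultimately show ?thesis using closed_graph_bounded total by blast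
qed

end
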